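(* Fix a horizon $T\in\mathbb{N}$, matrices $A_0,\dots,A_{T}\in\mathbb{R}^{n\times n}$, a symmetric positive definite noise covariance $\mathcal{W}\in\mathbb{R}^{n\times n}$, a symmetric positive definite initial covariance $\Sigma_0$, and for each $t=0,\dots,T$ sets $\mathsf{C}_t$ of real matrices with $n$ columns and $\mathsf{V}_t$ of symmetric positive definite matrices of compatible size. Let $\mathsf{R}_t=\{C_t^{\mathsf T}\mathcal{V}_t^{-1}C_t : C_t\in\mathsf{C}_t,\ \mathcal{V}_t\in\mathsf{V}_t\}$ and $h_t(M)=A_{t-1}MA_{t-1}^{\mathsf T}+\mathcal{W}$. Problem (D) (sensor design): minimize $\sum_{t=0}^T\mathrm{tr}(P_t)$ over $\{P_t,Q_t,Q_{t|t-1},R_t,C_t,\mathcal{V}_t\}_{t=0}^T$ subject to, for all $t$: $P_t=Q_t^{-1}$, $Q_t=Q_{t|t-1}+R_t$, $Q_{t|t-1}=(h_t(P_{t-1}))^{-1}$ for $t\ge1$, $Q_{0|-1}=\Sigma_0^{-1}$, $R_t=C_t^{\mathsf T}\mathcal{V}_t^{-1}C_t$, $C_t\in\mathsf{C}_t$, $\mathcal{V}_t\in\mathsf{V}_t$. Problem (R) (relaxation): minimize $\sum_{t=0}^T\mathrm{tr}(P_t)$ over $\{P_t,Q_t,Q_{t|t-1},R_t\}_{t=0}^T$ subject to, for all $t$: $Q_t=Q_{t|t-1}+R_t$, $\begin{bmatrix}P_t & I\\ I & Q_t\end{bmatrix}\succeq0$, for $t\ge1$: $\begin{bmatrix}\mathcal{W}^{-1}-Q_{t|t-1}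 & \mathcal{W}^{-1}A_{t-1}\\ A_{t-1}^{\mathsf T}\mathcal{W}^{-1} & Q_{t-1}+A_{t-1}^{\mathsf T}\mathcal{W}^{-1}A_{t-1}\end{bmatrix}\succeq0$, $R_t\in\mathsf{R}_t$, and $Q_{0|-1}=\Sigma_0^{-1}$. Then an optimal solution of Problem (R) is also an optimal solution of Problem (D), and vice versa.
   Context: Problem (D) is the sensor design problem for the linear system $X_{t+1}=A_tX_t+W_t$, $W_t\sim\mathcal N(0,\mathcal W)$ i.i.d., $X_0\sim\mathcal N(\mu_0,\Sigma_0)$, with a designed sensor $Y_t=C_tX_t+V_t$, $V_t\sim\mathcal N(0,\mathcal V_t)$; $P_t$ is the Kalman filter error covariance and $Q_t=P_t^{-1}$, $Q_{t|t-1}$ are information matrices. Problem (R) replaces $P_t=Q_t^{-1}$ by $P_t\succeq Q_t^{-1}$ and $Q_{t|t-1}=(h_t(P_{t-1}))^{-1}$ by $Q_{t|t-1}\preceq(h_t(Q_{t-1}^{-1}))^{-1}$, written as linear matrix inequalities via Schur complements. *)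

theory Defs
  imports "Jordan_Normal_Form.Matrix"
begin

definition mtrace :: "real mat \<Rightarrow> real" where
  "mtrace M = (\<Sum>i<dim_row M. M $$ (i, i))"

(* inverse of a square matrix (meaningful when the matrix is invertible) *)
definition minv :: "real mat \<Rightarrow> real mat" where
  "minv M = (THE B. B \<in> carrier_mat (dim_row M) (dim_row M) \<and> M * B = 1\<^sub>m (dim_row M) \<and> B * M = 1\<^sub>m (dim_row M))"

definition psd :: "real mat \<Rightarrow> bool" where
  "psd M \<longleftrightarrow> M \<in> carrier_mat (dim_row M) (dim_row M) \<and> M\<^sup>T = M \<and>
     (\<forall>x \<in> carrier_vec (dim_row M). 0 \<le> x \<bullet> (M *\<^sub>v x))"

definition pd :: "real mat \<Rightarrow> bool" where
  "pd M \<longleftrightarrow> M \<in> carrier_mat (dim_row M) (dim_row M) \<and> M\<^sup>T = M \<and>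
     (\<forall>x \<in> carrier_vec (dim_row M). x \<noteq> 0\<^sub>v (dim_row M) \<longrightarrow> 0 < x \<bullet> (M *\<^sub>v x))"

definition is_inv :: "nat \<Rightarrow> real mat \<Rightarrow> real mat \<Rightarrow> bool" where
  "is_inv n M N \<longleftrightarrow> M \<in> carrier_mat n n \<and> N \<in> carrier_mat n n \<and>
     M * N = 1\<^sub>m n \<and> N * M = 1\<^sub>m n"

definition hmap :: "(nat \<Rightarrow> real mat) \<Rightarrow> real mat \<Rightarrow> nat \<Rightarrow> real mat \<Rightarrow> real mat" where
  "hmap A W t M = A (t - 1) * M * (A (t - 1))\<^sup>T + W"

definition Rset :: "(nat \<Rightarrow> real mat set) \<Rightarrow> (nat \<Rightarrow> real mat set) \<Rightarrow> nat \<Rightarrow> real mat set" where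
  "Rset Cs Vs t = {C\<^sup>T * minv V * C | C V. C \<in> Cs t \<and> V \<in> Vs t}"

definition cost :: "nat \<Rightarrow> (nat \<Rightarrow> real mat) \<Rightarrow> real" where
  "cost T P = (\<Sum>t\<le>T. mtrace (P t))"

definition feasD ::
  "nat \<Rightarrow> nat \<Rightarrow> (nat \<Rightarrow> real mat) \<Rightarrow> real mat \<Rightarrow> real mat \<Rightarrow>
   (nat \<Rightarrow> real mat set) \<Rightarrow> (nat \<Rightarrow> real mat set) \<Rightarrow>
   (nat \<Rightarrow> real mat) \<Rightarrow> (nat \<Rightarrow> real mat) \<Rightarrow> (nat \<Rightarrow> real mat) \<Rightarrow> (nat \<Rightarrow> real mat) \<Rightarrow>
   (nat \<Rightarrow> real mat) \<Rightarrow> (nat \<Rightarrow> real mat) \<Rightarrow> bool" where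
  "feasD n T A W \<Sigma>0 Cs Vs P Q Qp R C V \<longleftrightarrow>
     (\<forall>t\<le>T. P t \<in> carrier_mat n n \<and> Q t \<in> carrier_mat n n \<and> Qp t \<in> carrier_mat n n
         \<and> R t \<in> carrier_mat n n
         \<and> is_inv n (P t) (Q t)
         \<and> Q t = Qp t + R t
         \<and> (1 \<le> t \<longrightarrow> is_inv n (Qp t) (hmap A W t (P (t - 1))))
         \<and> R t = (C t)\<^sup>T * minv (V t) * C t
         \<and> C t \<in> Cs t \<and> V t \<in> Vs t)
     \<and> is_inv n (Qp 0) \<Sigma>0"

definition feasR ::
  "nat \<Rightarrow> nat \<Rightarrow> (nat \<Rightarrow> real mat) \<Rightarrow> real mat \<Rightarrow> real mat \<Rightarrow>
   (nat \<Rightarrow> real mat set) \<Rightarrow> (nat \<Rightarrow> real mat set) \<Rightarrow>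
   (nat \<Rightarrow> real mat) \<Rightarrow> (nat \<Rightarrow> real mat) \<Rightarrow> (nat \<Rightarrow> real mat) \<Rightarrow> (nat \<Rightarrow> real mat) \<Rightarrow> bool" where
  "feasR n T A W \<Sigma>0 Cs Vs P Q Qp R \<longleftrightarrow>
     (\<forall>t\<le>T. P t \<in> carrier_mat n n \<and> Q t \<in> carrier_mat n n \<and> Qp t \<in> carrier_mat n n
         \<and> R t \<in> carrier_mat n n
         \<and> Q t = Qp t + R t
         \<and> psd (four_block_mat (P t) (1\<^sub>m n) (1\<^sub>m n) (Q t))
         \<and> (1 \<le> t \<longrightarrow>
              psd (four_block_mat (minv W - Qp t) (minv W * A (t - 1))
                     ((A (t - 1))\<^sup>T * minv W) (Q (t - 1) + (A (t - 1))\<^sup>T * minv W * A (t - 1))))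
         \<and> R t \<in> Rset Cs Vs t)
     \<and> is_inv n (Qp 0) \<Sigma>0"

definition optD where
  "optD n T A W \<Sigma>0 Cs Vs P Q Qp R C V \<longleftrightarrow>
     feasD n T A W \<Sigma>0 Cs Vs P Q Qp R C V \<and>
     (\<forall>P' Q' Qp' R' C' V'. feasD n T A W \<Sigma>0 Cs Vs P' Q' Qp' R' C' V' \<longrightarrow> cost T P \<le> cost T P')"

definition optR where
  "optR n T A W \<Sigma>0 Cs Vs P Q Qp R \<longleftrightarrow>
     feasR n T A W \<Sigma>0 Cs Vs P Q Qp R \<and>
     (\<forall>P' Q' Qp' R'. feasR n T A W \<Sigma>0 Cs Vs P' Q' Qp' R' \<longrightarrow> cost T P \<le> cost T P')"

end

theory Submission
  imports Defs "Jordan_Normal_Form.Determinant"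
begin

(* Both problems have the same cost, and every feasible point of (D) is feasible for (R): the first
   LMI is the Schur complement of P_t = Q_t^{-1}, and the quadratic form of the second one says that
   x' Q_{t|t-1} x <= (x + A_{t-1} y)' W^{-1} (x + A_{t-1} y) + y' Q_{t-1} y for all y, whose minimum
   over y is x' (h_t(Q_{t-1}^{-1}))^{-1} x.  Conversely, every R_t of a feasible point of (R) is
   realised by some sensor, and running the information filter on these R_t gives a feasible point
   of (D): the minimisation argument and induction on t give Q_t <= Q'_t, and then the first LMI
   gives P'_t <= P_t in the Loewner order.  So both problems have the same optimal value, and an optimum
   of (R) coincides with its improvement, because Loewner-ordered symmetric matrices with equal
   trace are equal. *)

section \<open>Inverses and definite matrices\<close>

lemma is_inv_commute: "is_inv n M N \<Longrightarrow> is_inv n N M"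
  unfolding is_inv_def by auto

lemma is_inv_unique:
  assumes "is_inv n M N" and "is_inv n M N'"
  shows "N = N'"
proof -
  have c: "M \<in> carrier_mat n n" "N \<in> carrier_mat n n" "N' \<in> carrier_mat n n"
    and e: "N * M = 1\<^sub>m n" "M * N' = 1\<^sub>m n"
    using assms unfolding is_inv_def by auto
  have "N = N * (M * N')" using c e by simp
  also have "\<dots> = (N * M) * N'" using c by (simp add: assoc_mult_mat)
  also have "\<dots> = N'" using c e by simp
  finally show ?thesis .
qed

lemma minv_eqI:
  assumes "is_inv n M N"
  shows "minv M = N"
proof -
  have "dim_row M = n" using assms unfolding is_inv_def by auto
  then show ?thesis
    unfolding minv_def
  proof (rule ssubst, intro the_equality)
    show "N \<in> carrier_mat n n \<and> M * N = 1\<^sub>m n \<and> N * M = 1\<^sub>m n"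
      using assms unfolding is_inv_def by auto
    fix B assume "B \<in> carrier_mat n n \<and> M * B = 1\<^sub>m n \<and> B * M = 1\<^sub>m n"
    then have "is_inv n M B" using assms unfolding is_inv_def by auto
    then show "B = N" using is_inv_unique assms by blast
  qed
qed

lemma is_inv_mult_vec_cancel:
  assumes "is_inv n M N" and "v \<in> carrier_vec n"
  shows "M *\<^sub>v (N *\<^sub>v v) = v"
  using assms unfolding is_inv_def by (metis assoc_mult_mat_vec one_mult_mat_vec)

lemma is_inv_symmetric:
  assumes "is_inv n M N" and "M\<^sup>T = M"
  shows "N\<^sup>T = N"
proof -
  have c: "M \<in> carrier_mat n n" "N \<in> carrier_mat n n"
    and e: "M * N = 1\<^sub>m n" "N * M = 1\<^sub>m n"
    using assms(1) unfolding is_inv_def by auto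
  have "M * N\<^sup>T = (N * M)\<^sup>T" "N\<^sup>T * M = (M * N)\<^sup>T"
    using c assms(2) by (metis transpose_mult)+
  then have "M * N\<^sup>T = 1\<^sub>m n" "N\<^sup>T * M = 1\<^sub>m n" using e by simp_all
  then have "is_inv n M N\<^sup>T" using c unfolding is_inv_def by auto
  then show ?thesis using is_inv_unique assms(1) by blast
qed

lemma psdI:
  assumes "M \<in> carrier_mat n n" and "M\<^sup>T = M"
    and "\<And>x. x \<in> carrier_vec n \<Longrightarrow> 0 \<le> x \<bullet> (M *\<^sub>v x)"
  shows "psd M"
  using assms unfolding psd_def by auto

lemma psd_sym: "psd M \<Longrightarrow> M\<^sup>T = M"
  unfolding psd_def by auto

lemma psd_quad_nonneg:
  assumes "psd M" and "M \<in> carrier_mat n n" and "x \<in> carrier_vec n"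
  shows "0 \<le> x \<bullet> (M *\<^sub>v x)"
  using assms unfolding psd_def by auto

lemma pdI:
  assumes "M \<in> carrier_mat n n" and "M\<^sup>T = M"
    and "\<And>x. x \<in> carrier_vec n \<Longrightarrow> x \<noteq> 0\<^sub>v n \<Longrightarrow> 0 < x \<bullet> (M *\<^sub>v x)"
  shows "pd M"
  using assms unfolding pd_def by auto

lemma pd_sym: "pd M \<Longrightarrow> M\<^sup>T = M"
  unfolding pd_def by auto

lemma pd_quad_pos:
  assumes "pd M" and "M \<in> carrier_mat n n" and "x \<in> carrier_vec n" and "x \<noteq> 0\<^sub>v n"
  shows "0 < x \<bullet> (M *\<^sub>v x)"
  using assms unfolding pd_def by auto

lemma pd_imp_psd:
  assumes "pd M"
  shows "psd M"
proof -
  let ?n = "dim_row M"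
  have M: "M \<in> carrier_mat ?n ?n" using assms unfolding pd_def by (rule conjunct1)
  show ?thesis
  proof (rule psdI[OF M pd_sym[OF assms]])
    fix x :: "real vec" assume x: "x \<in> carrier_vec ?n"
    show "0 \<le> x \<bullet> (M *\<^sub>v x)"
    proof (cases "x = 0\<^sub>v ?n")
      case True
      have "M *\<^sub>v 0\<^sub>v ?n \<in> carrier_vec ?n" by (rule carrier_vecI) (rule dim_mult_mat_vec)
      then show ?thesis unfolding True scalar_prod_left_zero by simp
    next
      case False
      show ?thesis using pd_quad_pos[OF assms M x False] by (rule less_imp_le)
    qed
  qed
qed

lemma pd_invertible:
  assumes M: "M \<in> carrier_mat n n" and "pd M"
  shows "\<exists>N. is_inv n M N"
proof -
  have "det M \<noteq> 0"
  proof
    assume "det M = 0"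
    then obtain v where v: "v \<in> carrier_vec n" "v \<noteq> 0\<^sub>v n" "M *\<^sub>v v = 0\<^sub>v n"
      using det_0_iff_vec_prod_zero[OF M] by auto
    have "0 < v \<bullet> (M *\<^sub>v v)" using pd_quad_pos[OF \<open>pd M\<close> M v(1,2)] .
    then show False using v by simp
  qed
  from det_non_zero_imp_unit[OF M this, of undefined]
  show ?thesis unfolding Units_def ring_mat_def is_inv_def using M by auto
qed

lemma is_inv_minv:
  assumes "M \<in> carrier_mat n n" and "pd M"
  shows "is_inv n M (minv M)"
  using pd_invertible[OF assms] minv_eqI by blast

lemma scalar_prod_sym_mat_swap:
  fixes M :: "real mat"
  assumes M: "M \<in> carrier_mat n n" "M\<^sup>T = M" and u: "u \<in> carrier_vec n" and v: "v \<in> carrier_vec n"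
  shows "u \<bullet> (M *\<^sub>v v) = v \<bullet> (M *\<^sub>v u)"
proof -
  have "u \<bullet> (M *\<^sub>v v) = (M\<^sup>T *\<^sub>v u) \<bullet> v" using transpose_vec_mult_scalar[OF M(1) v u] by simp
  also have "\<dots> = v \<bullet> (M *\<^sub>v u)" using M u v by (metis comm_scalar_prod mult_mat_vec_carrier)
  finally show ?thesis .
qed

lemma scalar_prod_transpose_mult:
  fixes A :: "real mat"
  assumes A: "A \<in> carrier_mat m n" and u: "u \<in> carrier_vec m" and y: "y \<in> carrier_vec n"
  shows "y \<bullet> (A\<^sup>T *\<^sub>v u) = (A *\<^sub>v y) \<bullet> u"
proof -
  have "y \<bullet> (A\<^sup>T *\<^sub>v u) = (A\<^sup>T *\<^sub>v u) \<bullet> y" by (rule comm_scalar_prod[of _ n]) (use A u y in auto)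
  also have "\<dots> = u \<bullet> (A *\<^sub>v y)" by (rule transpose_vec_mult_scalar[OF A y u])
  also have "\<dots> = (A *\<^sub>v y) \<bullet> u" by (rule comm_scalar_prod[of _ m]) (use A u y in auto)
  finally show ?thesis .
qed

lemma quad_form_add:
  fixes M :: "real mat"
  assumes M: "M \<in> carrier_mat n n" "M\<^sup>T = M" and u: "u \<in> carrier_vec n" and v: "v \<in> carrier_vec n"
  shows "(u + v) \<bullet> (M *\<^sub>v (u + v)) = u \<bullet> (M *\<^sub>v u) + 2 * (u \<bullet> (M *\<^sub>v v)) + v \<bullet> (M *\<^sub>v v)"
proof -
  have "(u + v) \<bullet> (M *\<^sub>v (u + v)) = (u + v) \<bullet> (M *\<^sub>v u + M *\<^sub>v v)"
    using M u v by (simp add: mult_add_distrib_mat_vec)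
  also have "\<dots> = u \<bullet> (M *\<^sub>v u) + u \<bullet> (M *\<^sub>v v) + (v \<bullet> (M *\<^sub>v u) + v \<bullet> (M *\<^sub>v v))"
    using M u v by (simp add: add_scalar_prod_distrib scalar_prod_add_distrib)
  finally show ?thesis using scalar_prod_sym_mat_swap[OF M v u] by simp
qed

lemma quad_form_diff:
  fixes M :: "real mat"
  assumes M: "M \<in> carrier_mat n n" "M\<^sup>T = M" and u: "u \<in> carrier_vec n" and v: "v \<in> carrier_vec n"
  shows "(u - v) \<bullet> (M *\<^sub>v (u - v)) = u \<bullet> (M *\<^sub>v u) - 2 * (u \<bullet> (M *\<^sub>v v)) + v \<bullet> (M *\<^sub>v v)"
proof -
  have "(u - v) \<bullet> (M *\<^sub>v (u - v)) = (u - v) \<bullet> (M *\<^sub>v u - M *\<^sub>v v)"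
    using M u v by (simp add: mult_minus_distrib_mat_vec)
  also have "\<dots> = u \<bullet> (M *\<^sub>v u) - u \<bullet> (M *\<^sub>v v) - (v \<bullet> (M *\<^sub>v u) - v \<bullet> (M *\<^sub>v v))"
    using M u v by (simp add: minus_scalar_prod_distrib[of _ n] scalar_prod_minus_distrib[of _ n])
  finally show ?thesis using scalar_prod_sym_mat_swap[OF M v u] by simp
qed

lemma quad_form_add_mat:
  fixes X :: "real mat"
  assumes "X \<in> carrier_mat n n" and "Y \<in> carrier_mat n n" and "x \<in> carrier_vec n"
  shows "x \<bullet> ((X + Y) *\<^sub>v x) = x \<bullet> (X *\<^sub>v x) + x \<bullet> (Y *\<^sub>v x)"
  using assms by (simp add: add_mult_distrib_mat_vec[of _ n n] scalar_prod_add_distrib[of _ n])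

lemma quad_form_inverse:
  assumes "is_inv n M N" and "M\<^sup>T = M" and x: "x \<in> carrier_vec n"
  shows "x \<bullet> (N *\<^sub>v x) = (N *\<^sub>v x) \<bullet> (M *\<^sub>v (N *\<^sub>v x))"
proof -
  have "N \<in> carrier_mat n n" using assms unfolding is_inv_def by auto
  then show ?thesis
    using is_inv_mult_vec_cancel[OF assms(1) x] x by (simp add: comm_scalar_prod[of _ n])
qed

lemma assoc_mult_mat_vec3:
  fixes A :: "real mat"
  assumes "A \<in> carrier_mat n1 n2" and "B \<in> carrier_mat n2 n3" and "C \<in> carrier_mat n3 n4"
    and "v \<in> carrier_vec n4"
  shows "(A * B * C) *\<^sub>v v = A *\<^sub>v (B *\<^sub>v (C *\<^sub>v v))"
proof -
  have "(A * B * C) *\<^sub>v v = (A * B) *\<^sub>v (C *\<^sub>v v)" by (rule assoc_mult_mat_vec) (use assms in auto)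
  also have "\<dots> = A *\<^sub>v (B *\<^sub>v (C *\<^sub>v v))" by (rule assoc_mult_mat_vec) (use assms in auto)
  finally show ?thesis .
qed

lemma quad_form_congruence:
  fixes C :: "real mat"
  assumes C: "C \<in> carrier_mat m n" and N: "N \<in> carrier_mat m m" and x: "x \<in> carrier_vec n"
  shows "x \<bullet> ((C\<^sup>T * N * C) *\<^sub>v x) = (C *\<^sub>v x) \<bullet> (N *\<^sub>v (C *\<^sub>v x))"
proof -
  have "(C\<^sup>T * N * C) *\<^sub>v x = C\<^sup>T *\<^sub>v (N *\<^sub>v (C *\<^sub>v x))"
    using assoc_mult_mat_vec3[of "C\<^sup>T" n m N m C n x] C N x by simp
  then show ?thesis using scalar_prod_transpose_mult[OF C _ x] C N x by simp
qed

lemma congruence_symmetric: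
  fixes C :: "real mat"
  assumes C: "C \<in> carrier_mat m n" and N: "N \<in> carrier_mat m m" and "N\<^sup>T = N"
  shows "(C\<^sup>T * N * C)\<^sup>T = C\<^sup>T * N * C"
proof -
  have "(C\<^sup>T * N * C)\<^sup>T = C\<^sup>T * (C\<^sup>T * N)\<^sup>T"
    by (rule transpose_mult[of _ n m _ n]) (use C N in auto)
  also have "(C\<^sup>T * N)\<^sup>T = N * C"
    using transpose_mult[of "C\<^sup>T" n m N m] C N \<open>N\<^sup>T = N\<close> by simp
  also have "C\<^sup>T * (N * C) = C\<^sup>T * N * C"
    by (rule assoc_mult_mat[symmetric]) (use C N in auto)
  finally show ?thesis .
qed

lemma psd_congruence:
  fixes C :: "real mat"
  assumes "psd N" and C: "C \<in> carrier_mat m n" and N: "N \<in> carrier_mat m m"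
  shows "psd (C\<^sup>T * N * C)"
proof (rule psdI)
  show "C\<^sup>T * N * C \<in> carrier_mat n n" using C N by simp
  show "(C\<^sup>T * N * C)\<^sup>T = C\<^sup>T * N * C" by (rule congruence_symmetric[OF C N psd_sym[OF \<open>psd N\<close>]])
  show "0 \<le> x \<bullet> ((C\<^sup>T * N * C) *\<^sub>v x)" if "x \<in> carrier_vec n" for x
    using quad_form_congruence[OF C N that] psd_quad_nonneg[OF \<open>psd N\<close> N] C that by simp
qed

lemma psd_inverse:
  assumes "psd M" and "is_inv n M N"
  shows "psd N"
proof -
  have c: "M \<in> carrier_mat n n" "N \<in> carrier_mat n n" using assms(2) unfolding is_inv_def by auto
  show ?thesis
  proof (rule psdI[OF c(2) is_inv_symmetric[OF assms(2) psd_sym[OF assms(1)]]])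
    fix x :: "real vec" assume x: "x \<in> carrier_vec n"
    show "0 \<le> x \<bullet> (N *\<^sub>v x)"
      using quad_form_inverse[OF assms(2) psd_sym[OF assms(1)] x] psd_quad_nonneg[OF assms(1) c(1)] c x
      by simp
  qed
qed

lemma pd_inverse:
  assumes "pd M" and inv: "is_inv n M N"
  shows "pd N"
proof -
  have c: "M \<in> carrier_mat n n" "N \<in> carrier_mat n n" using inv unfolding is_inv_def by auto
  show ?thesis
  proof (rule pdI[OF c(2) is_inv_symmetric[OF inv pd_sym[OF assms(1)]]])
    fix x :: "real vec" assume x: "x \<in> carrier_vec n" "x \<noteq> 0\<^sub>v n"
    have "N *\<^sub>v x \<noteq> 0\<^sub>v n"
    proof
      assume "N *\<^sub>v x = 0\<^sub>v n"
      then have "x = M *\<^sub>v 0\<^sub>v n" using is_inv_mult_vec_cancel[OF inv x(1)] by simp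
      also have "\<dots> = 0\<^sub>v n" using c by auto
      finally show False using x(2) by simp
    qed
    then show "0 < x \<bullet> (N *\<^sub>v x)"
      using quad_form_inverse[OF inv pd_sym[OF assms(1)] x(1)] pd_quad_pos[OF assms(1) c(1)] c x
      by simp
  qed
qed

lemma pd_add_psd:
  assumes "pd X" and "psd Y" and X: "X \<in> carrier_mat n n" and Y: "Y \<in> carrier_mat n n"
  shows "pd (X + Y)"
proof (rule pdI)
  show "X + Y \<in> carrier_mat n n" using X Y by simp
  show "(X + Y)\<^sup>T = X + Y"
    using transpose_add[OF X Y] pd_sym[OF assms(1)] psd_sym[OF assms(2)] by simp
  show "0 < x \<bullet> ((X + Y) *\<^sub>v x)" if "x \<in> carrier_vec n" "x \<noteq> 0\<^sub>v n" for x
    using quad_form_add_mat[OF X Y that(1)] pd_quad_pos[OF assms(1) X that]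
      psd_quad_nonneg[OF assms(2) Y that(1)] by linarith
qed

section \<open>Loewner order and trace\<close>

definition loewner_le :: "nat \<Rightarrow> real mat \<Rightarrow> real mat \<Rightarrow> bool" where
  "loewner_le n X Y \<longleftrightarrow> (\<forall>x \<in> carrier_vec n. x \<bullet> (X *\<^sub>v x) \<le> x \<bullet> (Y *\<^sub>v x))"

lemma loewner_leI:
  "(\<And>x. x \<in> carrier_vec n \<Longrightarrow> x \<bullet> (X *\<^sub>v x) \<le> x \<bullet> (Y *\<^sub>v x)) \<Longrightarrow> loewner_le n X Y"
  unfolding loewner_le_def by blast

lemma loewner_leD:
  "loewner_le n X Y \<Longrightarrow> x \<in> carrier_vec n \<Longrightarrow> x \<bullet> (X *\<^sub>v x) \<le> x \<bullet> (Y *\<^sub>v x)"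
  unfolding loewner_le_def by blast

lemma loewner_le_add_right:
  assumes "loewner_le n X Y"
    and "X \<in> carrier_mat n n" and "Y \<in> carrier_mat n n" and "Z \<in> carrier_mat n n"
  shows "loewner_le n (X + Z) (Y + Z)"
  using assms loewner_leD[OF assms(1)] by (intro loewner_leI) (simp add: quad_form_add_mat)

lemma quad_form_unit_vec:
  fixes X :: "real mat"
  assumes X: "X \<in> carrier_mat n n" and i: "i < n" and j: "j < n"
  shows "unit_vec n i \<bullet> (X *\<^sub>v unit_vec n j) = X $$ (i, j)"
proof -
  have "unit_vec n i \<bullet> (X *\<^sub>v unit_vec n j) = (X *\<^sub>v unit_vec n j) $ i"
    by (rule scalar_prod_left_unit) (use X i in auto)
  also have "\<dots> = row X i \<bullet> unit_vec n j" using X i by simp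
  also have "\<dots> = X $$ (i, j)" using X i j by simp
  finally show ?thesis .
qed

lemma trace_mono_loewner:
  assumes "loewner_le n X Y" and X: "X \<in> carrier_mat n n" and Y: "Y \<in> carrier_mat n n"
  shows "mtrace X \<le> mtrace Y"
proof -
  have "X $$ (i, i) \<le> Y $$ (i, i)" if "i < n" for i
    using loewner_leD[OF assms(1), of "unit_vec n i"]
      quad_form_unit_vec[OF X that that] quad_form_unit_vec[OF Y that that] by simp
  then show ?thesis unfolding mtrace_def using X Y by (auto intro: sum_mono)
qed

lemma psd_zero_diag_eq_zero:
  assumes "psd D" and D: "D \<in> carrier_mat n n" and diag: "\<And>i. i < n \<Longrightarrow> D $$ (i, i) = 0"
  shows "D = 0\<^sub>m n n"
proof (rule eq_matI)
  fix i j assume "i < dim_row (0\<^sub>m n n)" "j < dim_col (0\<^sub>m n n)"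
  then have i: "i < n" and j: "j < n" by auto
  let ?a = "unit_vec n i" and ?b = "unit_vec n j"
  have a: "?a \<in> carrier_vec n" and b: "?b \<in> carrier_vec n" by simp_all
  have "0 \<le> (?a + ?b) \<bullet> (D *\<^sub>v (?a + ?b))" "0 \<le> (?a - ?b) \<bullet> (D *\<^sub>v (?a - ?b))"
    using psd_quad_nonneg[OF \<open>psd D\<close> D] a b by (meson add_carrier_vec minus_carrier_vec)+
  moreover have "?a \<bullet> (D *\<^sub>v ?a) = 0" "?b \<bullet> (D *\<^sub>v ?b) = 0" "?a \<bullet> (D *\<^sub>v ?b) = D $$ (i, j)"
    using quad_form_unit_vec[OF D] diag i j by auto
  ultimately have "D $$ (i, j) = 0"
    using quad_form_add[OF D psd_sym[OF \<open>psd D\<close>] a b] quad_form_diff[OF D psd_sym[OF \<open>psd D\<close>] a b]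
    by linarith
  then show "D $$ (i, j) = 0\<^sub>m n n $$ (i, j)" using i j by simp
qed (use D in auto)

lemma loewner_le_trace_eq:
  assumes le: "loewner_le n X Y" and X: "X \<in> carrier_mat n n" and Y: "Y \<in> carrier_mat n n"
    and "X\<^sup>T = X" and "Y\<^sup>T = Y" and tr: "mtrace X = mtrace Y"
  shows "X = Y"
proof -
  have D: "Y - X \<in> carrier_mat n n" by (rule minus_carrier_mat[OF X])
  have psd: "psd (Y - X)"
  proof (rule psdI[OF D])
    show "(Y - X)\<^sup>T = Y - X" using transpose_minus[OF Y X] assms(4,5) by simp
    show "0 \<le> x \<bullet> ((Y - X) *\<^sub>v x)" if x: "x \<in> carrier_vec n" for x
      using loewner_leD[OF le x] X Y x
      by (simp add: minus_mult_distrib_mat_vec[of _ n n] scalar_prod_minus_distrib[of _ n])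
  qed
  have diag: "(Y - X) $$ (i, i) = Y $$ (i, i) - X $$ (i, i)" if "i < n" for i
    using that X Y by simp
  have "(\<Sum>i<n. (Y - X) $$ (i, i)) = mtrace Y - mtrace X"
    unfolding mtrace_def using X Y diag by (simp add: sum_subtractf)
  then have "(\<Sum>i<n. (Y - X) $$ (i, i)) = 0" using tr by simp
  moreover have "0 \<le> (Y - X) $$ (i, i)" if "i < n" for i
    using psd_quad_nonneg[OF psd D, of "unit_vec n i"] quad_form_unit_vec[OF D that that] by simp
  ultimately have "(Y - X) $$ (i, i) = 0" if "i < n" for i
    using sum_nonneg_eq_0_iff[of "{..<n}" "\<lambda>i. (Y - X) $$ (i, i)"] that by auto
  then have "Y - X = 0\<^sub>m n n" by (rule psd_zero_diag_eq_zero[OF psd D])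
  show "X = Y"
  proof (rule eq_matI)
    fix i j assume "i < dim_row Y" "j < dim_col Y"
    then have "(Y - X) $$ (i, j) = Y $$ (i, j) - X $$ (i, j)" using X Y by simp
    moreover have "(Y - X) $$ (i, j) = 0" using \<open>Y - X = 0\<^sub>m n n\<close> \<open>i < dim_row Y\<close> \<open>j < dim_col Y\<close> Y by simp
    ultimately show "X $$ (i, j) = Y $$ (i, j)" by simp
  qed (use X Y in auto)
qed

lemma loewner_le_antisym:
  assumes "loewner_le n X Y" and "loewner_le n Y X"
    and "X \<in> carrier_mat n n" and "Y \<in> carrier_mat n n" and "X\<^sup>T = X" and "Y\<^sup>T = Y"
  shows "X = Y"
proof (rule loewner_le_trace_eq[OF assms(1,3-6)])
  show "mtrace X = mtrace Y"
    using trace_mono_loewner[OF assms(1,3,4)] trace_mono_loewner[OF assms(2,4,3)] by linarith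
qed

lemma add_mat_right_cancel:
  fixes X :: "real mat"
  assumes "X + Z = Y + Z" and X: "X \<in> carrier_mat n n" and Y: "Y \<in> carrier_mat n n"
    and Z: "Z \<in> carrier_mat n n"
  shows "X = Y"
proof (rule eq_matI)
  fix i j assume "i < dim_row Y" "j < dim_col Y"
  moreover have "(X + Z) $$ (i, j) = (Y + Z) $$ (i, j)" using assms(1) by simp
  ultimately show "X $$ (i, j) = Y $$ (i, j)" using X Y Z by simp
qed (use X Y in auto)

lemma cost_mono_loewner:
  assumes "\<And>t. t \<le> T \<Longrightarrow> loewner_le n (P' t) (P t)"
    and "\<And>t. t \<le> T \<Longrightarrow> P' t \<in> carrier_mat n n" and "\<And>t. t \<le> T \<Longrightarrow> P t \<in> carrier_mat n n"
  shows "cost T P' \<le> cost T P"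
  unfolding cost_def by (rule sum_mono, rule trace_mono_loewner) (use assms in auto)

section \<open>Block matrices and Schur complements\<close>

lemma four_block_quad_form:
  fixes X :: "real mat"
  assumes c: "X \<in> carrier_mat n n" "Y \<in> carrier_mat n n" "Z \<in> carrier_mat n n" "U \<in> carrier_mat n n"
    and x: "x \<in> carrier_vec n" and y: "y \<in> carrier_vec n"
  shows "(x @\<^sub>v y) \<bullet> (four_block_mat X Y Z U *\<^sub>v (x @\<^sub>v y))
       = x \<bullet> (X *\<^sub>v x + Y *\<^sub>v y) + y \<bullet> (Z *\<^sub>v x + U *\<^sub>v y)"
  using c x y by (simp add: four_block_mat_mult_vec[OF c x y] scalar_prod_append[of _ n _ n])

lemma psd_four_blockI:
  fixes X :: "real mat"
  assumes c: "X \<in> carrier_mat n n" "Y \<in> carrier_mat n n" "Z \<in> carrier_mat n n" "U \<in> carrier_mat n n"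
    and sym: "X\<^sup>T = X" "U\<^sup>T = U" "Y\<^sup>T = Z"
    and nonneg: "\<And>x y. x \<in> carrier_vec n \<Longrightarrow> y \<in> carrier_vec n \<Longrightarrow>
      0 \<le> x \<bullet> (X *\<^sub>v x + Y *\<^sub>v y) + y \<bullet> (Z *\<^sub>v x + U *\<^sub>v y)"
  shows "psd (four_block_mat X Y Z U)"
proof (rule psdI)
  let ?B = "four_block_mat X Y Z U"
  show "?B \<in> carrier_mat (n + n) (n + n)" using c by simp
  have "Z\<^sup>T = Y" using sym(3) by auto
  then show "?B\<^sup>T = ?B" using c sym by (simp add: transpose_four_block_mat[OF c])
  fix v :: "real vec" assume v: "v \<in> carrier_vec (n + n)"
  then have "v = vec_first v n @\<^sub>v vec_last v n" by simp
  then show "0 \<le> v \<bullet> (?B *\<^sub>v v)"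
    using nonneg[of "vec_first v n" "vec_last v n"]
      four_block_quad_form[OF c, of "vec_first v n" "vec_last v n"] by simp
qed

lemma psd_four_blockD:
  fixes X :: "real mat"
  assumes c: "X \<in> carrier_mat n n" "Y \<in> carrier_mat n n" "Z \<in> carrier_mat n n" "U \<in> carrier_mat n n"
    and psd: "psd (four_block_mat X Y Z U)"
    and x: "x \<in> carrier_vec n" and y: "y \<in> carrier_vec n"
  shows "0 \<le> x \<bullet> (X *\<^sub>v x + Y *\<^sub>v y) + y \<bullet> (Z *\<^sub>v x + U *\<^sub>v y)"
proof -
  have "four_block_mat X Y Z U \<in> carrier_mat (n + n) (n + n)" using c by simp
  from psd_quad_nonneg[OF psd this, of "x @\<^sub>v y"] show ?thesis
    using four_block_quad_form[OF c x y] x y by simp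
qed

lemma psd_four_block_diag_sym:
  fixes X :: "real mat"
  assumes c: "X \<in> carrier_mat n n" "Y \<in> carrier_mat n n" "Z \<in> carrier_mat n n" "U \<in> carrier_mat n n"
    and psd: "psd (four_block_mat X Y Z U)"
  shows "X\<^sup>T = X" and "U\<^sup>T = U"
proof -
  let ?B = "four_block_mat X Y Z U"
  have sym: "?B\<^sup>T = ?B" by (rule psd_sym[OF psd])
  show "X\<^sup>T = X"
  proof (rule eq_matI)
    fix i j assume "i < dim_row X" "j < dim_col X"
    moreover have "?B\<^sup>T $$ (i, j) = ?B $$ (i, j)" using sym by simp
    ultimately show "X\<^sup>T $$ (i, j) = X $$ (i, j)" using c by simp
  qed (use c in auto)
  show "U\<^sup>T = U"
  proof (rule eq_matI)
    fix i j assume "i < dim_row U" "j < dim_col U"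
    moreover have "?B\<^sup>T $$ (n + i, n + j) = ?B $$ (n + i, n + j)" using sym by simp
    ultimately show "U\<^sup>T $$ (i, j) = U $$ (i, j)" using c by simp
  qed (use c in auto)
qed

lemma identity_block_quad_form:
  fixes P :: "real mat"
  assumes P: "P \<in> carrier_mat n n" and Q: "Q \<in> carrier_mat n n"
    and x: "x \<in> carrier_vec n" and y: "y \<in> carrier_vec n"
  shows "x \<bullet> (P *\<^sub>v x + 1\<^sub>m n *\<^sub>v y) + y \<bullet> (1\<^sub>m n *\<^sub>v x + Q *\<^sub>v y)
       = x \<bullet> (P *\<^sub>v x) + 2 * (x \<bullet> y) + y \<bullet> (Q *\<^sub>v y)"
  using P Q x y
  by (simp add: scalar_prod_add_distrib[of _ n] comm_scalar_prod[of y n x])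

lemma psd_identity_block_inverse:
  assumes inv: "is_inv n P Q" and "psd Q"
  shows "psd (four_block_mat P (1\<^sub>m n) (1\<^sub>m n) Q)"
proof -
  have P: "P \<in> carrier_mat n n" and Q: "Q \<in> carrier_mat n n" using inv unfolding is_inv_def by auto
  have symQ: "Q\<^sup>T = Q" by (rule psd_sym[OF \<open>psd Q\<close>])
  have invQ: "is_inv n Q P" by (rule is_inv_commute[OF inv])
  show ?thesis
  proof (rule psd_four_blockI[OF P one_carrier_mat one_carrier_mat Q
        is_inv_symmetric[OF invQ symQ] symQ transpose_one])
    fix x y :: "real vec" assume x: "x \<in> carrier_vec n" and y: "y \<in> carrier_vec n"
    define u where "u = P *\<^sub>v x"
    have u: "u \<in> carrier_vec n" using u_def P x by simp
    have "0 \<le> (u + y) \<bullet> (Q *\<^sub>v (u + y))" using psd_quad_nonneg[OF \<open>psd Q\<close> Q] u y by simp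
    also have "\<dots> = u \<bullet> (Q *\<^sub>v u) + 2 * (u \<bullet> (Q *\<^sub>v y)) + y \<bullet> (Q *\<^sub>v y)"
      by (rule quad_form_add[OF Q symQ u y])
    also have "u \<bullet> (Q *\<^sub>v u) = x \<bullet> (P *\<^sub>v x)"
      using quad_form_inverse[OF invQ symQ x] u_def by simp
    also have "u \<bullet> (Q *\<^sub>v y) = x \<bullet> y"
      using scalar_prod_sym_mat_swap[OF Q symQ u y] is_inv_mult_vec_cancel[OF invQ x]
        comm_scalar_prod[OF y x] u_def by simp
    finally show "0 \<le> x \<bullet> (P *\<^sub>v x + 1\<^sub>m n *\<^sub>v y) + y \<bullet> (1\<^sub>m n *\<^sub>v x + Q *\<^sub>v y)"
      unfolding identity_block_quad_form[OF P Q x y] .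
  qed
qed

lemma identity_block_lower_bound:
  fixes P :: "real mat"
  assumes P: "P \<in> carrier_mat n n" and Q: "Q \<in> carrier_mat n n"
    and psd: "psd (four_block_mat P (1\<^sub>m n) (1\<^sub>m n) Q)"
    and x: "x \<in> carrier_vec n" and z: "z \<in> carrier_vec n"
  shows "2 * (x \<bullet> z) - z \<bullet> (Q *\<^sub>v z) \<le> x \<bullet> (P *\<^sub>v x)"
proof -
  have mz: "- z \<in> carrier_vec n" using z by simp
  have "0 \<le> x \<bullet> (P *\<^sub>v x) + 2 * (x \<bullet> - z) + (- z) \<bullet> (Q *\<^sub>v - z)"
    using psd_four_blockD[OF P one_carrier_mat one_carrier_mat Q psd x mz]
    unfolding identity_block_quad_form[OF P Q x mz] .
  moreover have "x \<bullet> - z = - (x \<bullet> z)" using x z by simp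
  moreover have "(- z) \<bullet> (Q *\<^sub>v - z) = z \<bullet> (Q *\<^sub>v z)"
  proof -
    have "Q *\<^sub>v - z = - (Q *\<^sub>v z)" using Q z by (intro eq_vecI) auto
    then show ?thesis using Q z by simp
  qed
  ultimately show ?thesis by linarith
qed

lemma loewner_le_inverse_of_identity_block:
  assumes P: "P \<in> carrier_mat n n" and Q: "Q \<in> carrier_mat n n"
    and psd: "psd (four_block_mat P (1\<^sub>m n) (1\<^sub>m n) Q)"
    and le: "loewner_le n Q Q'" and inv: "is_inv n Q' P'" and sym: "Q'\<^sup>T = Q'"
  shows "loewner_le n P' P"
proof (rule loewner_leI)
  fix x :: "real vec" assume x: "x \<in> carrier_vec n"
  have P': "P' \<in> carrier_mat n n" using inv unfolding is_inv_def by auto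
  define z where "z = P' *\<^sub>v x"
  have z: "z \<in> carrier_vec n" using z_def P' x by simp
  have "2 * (x \<bullet> z) - z \<bullet> (Q *\<^sub>v z) \<le> x \<bullet> (P *\<^sub>v x)"
    by (rule identity_block_lower_bound[OF P Q psd x z])
  moreover have "z \<bullet> (Q *\<^sub>v z) \<le> z \<bullet> (Q' *\<^sub>v z)" by (rule loewner_leD[OF le z])
  moreover have "z \<bullet> (Q' *\<^sub>v z) = x \<bullet> (P' *\<^sub>v x)" using quad_form_inverse[OF inv sym x] z_def by simp
  moreover have "x \<bullet> z = x \<bullet> (P' *\<^sub>v x)" using z_def by simp
  ultimately show "x \<bullet> (P' *\<^sub>v x) \<le> x \<bullet> (P *\<^sub>v x)" by linarith
qed

lemma loewner_le_of_identity_block_inverse: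
  assumes P: "P \<in> carrier_mat n n" and Q: "Q \<in> carrier_mat n n"
    and psd: "psd (four_block_mat P (1\<^sub>m n) (1\<^sub>m n) Q)"
    and inv: "is_inv n Q' P" and sym: "Q'\<^sup>T = Q'"
  shows "loewner_le n Q' Q"
proof (rule loewner_leI)
  fix z :: "real vec" assume z: "z \<in> carrier_vec n"
  have Q': "Q' \<in> carrier_mat n n" using inv unfolding is_inv_def by auto
  define x where "x = Q' *\<^sub>v z"
  have x: "x \<in> carrier_vec n" using x_def Q' z by simp
  have Px: "P *\<^sub>v x = z" using is_inv_mult_vec_cancel[OF is_inv_commute[OF inv] z] x_def by simp
  have "2 * (x \<bullet> z) - z \<bullet> (Q *\<^sub>v z) \<le> x \<bullet> (P *\<^sub>v x)"
    by (rule identity_block_lower_bound[OF P Q psd x z])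
  moreover have "x \<bullet> z = z \<bullet> (Q' *\<^sub>v z)" using x_def x z by (simp add: comm_scalar_prod[of _ n])
  ultimately show "z \<bullet> (Q' *\<^sub>v z) \<le> z \<bullet> (Q *\<^sub>v z)" unfolding Px by linarith
qed

lemma info_lmi_quad_form:
  fixes A :: "real mat"
  assumes c: "Wi \<in> carrier_mat n n" "Qp \<in> carrier_mat n n" "Q \<in> carrier_mat n n" "A \<in> carrier_mat n n"
    and sym: "Wi\<^sup>T = Wi" and x: "x \<in> carrier_vec n" and y: "y \<in> carrier_vec n"
  shows "x \<bullet> ((Wi - Qp) *\<^sub>v x + (Wi * A) *\<^sub>v y) + y \<bullet> ((A\<^sup>T * Wi) *\<^sub>v x + (Q + A\<^sup>T * Wi * A) *\<^sub>v y)
       = (x + A *\<^sub>v y) \<bullet> (Wi *\<^sub>v (x + A *\<^sub>v y)) - x \<bullet> (Qp *\<^sub>v x) + y \<bullet> (Q *\<^sub>v y)"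
proof -
  define a where "a = A *\<^sub>v y"
  have a: "a \<in> carrier_vec n" using a_def c y by simp
  have v: "Wi *\<^sub>v x \<in> carrier_vec n" "Qp *\<^sub>v x \<in> carrier_vec n" "Wi *\<^sub>v a \<in> carrier_vec n" "Q *\<^sub>v y \<in> carrier_vec n"
    using c x a y by auto
  have e1: "(Wi - Qp) *\<^sub>v x = Wi *\<^sub>v x - Qp *\<^sub>v x" using c x by (simp add: minus_mult_distrib_mat_vec)
  have e2: "(Wi * A) *\<^sub>v y = Wi *\<^sub>v a" using c y a_def by simp
  have e3: "(A\<^sup>T * Wi) *\<^sub>v x = A\<^sup>T *\<^sub>v (Wi *\<^sub>v x)" using c x by simp
  have e4: "(Q + A\<^sup>T * Wi * A) *\<^sub>v y = Q *\<^sub>v y + A\<^sup>T *\<^sub>v (Wi *\<^sub>v a)"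
    using c y a_def assoc_mult_mat_vec3[of "A\<^sup>T" n n Wi n A n y] by (simp add: add_mult_distrib_mat_vec[of _ n n])
  have t1: "x \<bullet> (Wi *\<^sub>v x - Qp *\<^sub>v x + Wi *\<^sub>v a) = x \<bullet> (Wi *\<^sub>v x) - x \<bullet> (Qp *\<^sub>v x) + x \<bullet> (Wi *\<^sub>v a)"
    using x v by (simp add: scalar_prod_add_distrib[of _ n] scalar_prod_minus_distrib[of _ n])
  have t2: "y \<bullet> (A\<^sup>T *\<^sub>v (Wi *\<^sub>v x) + (Q *\<^sub>v y + A\<^sup>T *\<^sub>v (Wi *\<^sub>v a)))
      = y \<bullet> (A\<^sup>T *\<^sub>v (Wi *\<^sub>v x)) + y \<bullet> (Q *\<^sub>v y) + y \<bullet> (A\<^sup>T *\<^sub>v (Wi *\<^sub>v a))"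
    using y v c by (simp add: scalar_prod_add_distrib[of _ n])
  have t3: "y \<bullet> (A\<^sup>T *\<^sub>v (Wi *\<^sub>v x)) = x \<bullet> (Wi *\<^sub>v a)"
    using scalar_prod_transpose_mult[OF c(4) v(1) y] scalar_prod_sym_mat_swap[OF c(1) sym a x] a_def by simp
  have t4: "y \<bullet> (A\<^sup>T *\<^sub>v (Wi *\<^sub>v a)) = a \<bullet> (Wi *\<^sub>v a)"
    using scalar_prod_transpose_mult[OF c(4) v(3) y] a_def by simp
  have q: "(x + a) \<bullet> (Wi *\<^sub>v (x + a)) = x \<bullet> (Wi *\<^sub>v x) + 2 * (x \<bullet> (Wi *\<^sub>v a)) + a \<bullet> (Wi *\<^sub>v a)"
    by (rule quad_form_add[OF c(1) sym x a])
  show ?thesis unfolding e1 e2 e3 e4 t1 t2 t3 t4 a_def[symmetric] q by simp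
qed

lemma info_lmi_bound:
  fixes A :: "real mat"
  assumes c: "Wi \<in> carrier_mat n n" "Qp \<in> carrier_mat n n" "Q \<in> carrier_mat n n" "A \<in> carrier_mat n n"
    and sym: "Wi\<^sup>T = Wi"
    and psd: "psd (four_block_mat (Wi - Qp) (Wi * A) (A\<^sup>T * Wi) (Q + A\<^sup>T * Wi * A))"
    and x: "x \<in> carrier_vec n" and y: "y \<in> carrier_vec n"
  shows "x \<bullet> (Qp *\<^sub>v x) \<le> (x + A *\<^sub>v y) \<bullet> (Wi *\<^sub>v (x + A *\<^sub>v y)) + y \<bullet> (Q *\<^sub>v y)"
proof -
  have "Wi - Qp \<in> carrier_mat n n" "Wi * A \<in> carrier_mat n n" "A\<^sup>T * Wi \<in> carrier_mat n n"
    "Q + A\<^sup>T * Wi * A \<in> carrier_mat n n" using c by auto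
  from psd_four_blockD[OF this psd x y] show ?thesis
    unfolding info_lmi_quad_form[OF c sym x y] by linarith
qed

lemma psd_info_lmiI:
  fixes A :: "real mat"
  assumes c: "Wi \<in> carrier_mat n n" "Qp \<in> carrier_mat n n" "Q \<in> carrier_mat n n" "A \<in> carrier_mat n n"
    and sym: "Wi\<^sup>T = Wi" "Qp\<^sup>T = Qp" "Q\<^sup>T = Q"
    and bound: "\<And>x y. x \<in> carrier_vec n \<Longrightarrow> y \<in> carrier_vec n \<Longrightarrow>
      x \<bullet> (Qp *\<^sub>v x) \<le> (x + A *\<^sub>v y) \<bullet> (Wi *\<^sub>v (x + A *\<^sub>v y)) + y \<bullet> (Q *\<^sub>v y)"
  shows "psd (four_block_mat (Wi - Qp) (Wi * A) (A\<^sup>T * Wi) (Q + A\<^sup>T * Wi * A))"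
proof (rule psd_four_blockI)
  show "Wi - Qp \<in> carrier_mat n n" "Wi * A \<in> carrier_mat n n" "A\<^sup>T * Wi \<in> carrier_mat n n"
    "Q + A\<^sup>T * Wi * A \<in> carrier_mat n n" using c by auto
  show "(Wi - Qp)\<^sup>T = Wi - Qp" using transpose_minus[OF c(1,2)] sym by simp
  have "A\<^sup>T * Wi * A \<in> carrier_mat n n" using c by simp
  then show "(Q + A\<^sup>T * Wi * A)\<^sup>T = Q + A\<^sup>T * Wi * A"
    using transpose_add[OF c(3)] congruence_symmetric[OF c(4) c(1) sym(1)] sym(3) by simp
  show "(Wi * A)\<^sup>T = A\<^sup>T * Wi" using transpose_mult[OF c(1) c(4)] sym(1) by simp
  fix x y :: "real vec" assume x: "x \<in> carrier_vec n" and y: "y \<in> carrier_vec n"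
  show "0 \<le> x \<bullet> ((Wi - Qp) *\<^sub>v x + (Wi * A) *\<^sub>v y) + y \<bullet> ((A\<^sup>T * Wi) *\<^sub>v x + (Q + A\<^sup>T * Wi * A) *\<^sub>v y)"
    unfolding info_lmi_quad_form[OF c sym(1) x y] using bound[OF x y] by linarith
qed

lemma info_completing_square:
  fixes A :: "real mat"
  assumes A: "A \<in> carrier_mat n n" and invW: "is_inv n W Wi" and symW: "W\<^sup>T = W"
    and invQ: "is_inv n Q P" and symQ: "Q\<^sup>T = Q" and invM: "is_inv n (A * P * A\<^sup>T + W) Mi"
    and x: "x \<in> carrier_vec n" and y: "y \<in> carrier_vec n"
  defines "l \<equiv> Mi *\<^sub>v x"
  shows "(x + A *\<^sub>v y) \<bullet> (Wi *\<^sub>v (x + A *\<^sub>v y)) + y \<bullet> (Q *\<^sub>v y)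
       = x \<bullet> (Mi *\<^sub>v x) + (x + A *\<^sub>v y - W *\<^sub>v l) \<bullet> (Wi *\<^sub>v (x + A *\<^sub>v y - W *\<^sub>v l))
         + (y + P *\<^sub>v (A\<^sup>T *\<^sub>v l)) \<bullet> (Q *\<^sub>v (y + P *\<^sub>v (A\<^sup>T *\<^sub>v l)))"
proof -
  have W: "W \<in> carrier_mat n n" and Wi: "Wi \<in> carrier_mat n n" and Q: "Q \<in> carrier_mat n n"
    and P: "P \<in> carrier_mat n n" and Mi: "Mi \<in> carrier_mat n n"
    using invW invQ invM unfolding is_inv_def by auto
  have symWi: "Wi\<^sup>T = Wi" by (rule is_inv_symmetric[OF invW symW])
  define w where "w = x + A *\<^sub>v y"
  define u where "u = A\<^sup>T *\<^sub>v l"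
  have l: "l \<in> carrier_vec n" using l_def Mi x by simp
  have w: "w \<in> carrier_vec n" using w_def A x y by simp
  have u: "u \<in> carrier_vec n" using u_def A l by simp
  have Wl: "W *\<^sub>v l \<in> carrier_vec n" and Pu: "P *\<^sub>v u \<in> carrier_vec n" using W P l u by auto
  have "l \<bullet> x = l \<bullet> ((A * P * A\<^sup>T + W) *\<^sub>v l)"
    using is_inv_mult_vec_cancel[OF invM x] l_def by simp
  also have "\<dots> = l \<bullet> ((A * P * A\<^sup>T) *\<^sub>v l) + l \<bullet> (W *\<^sub>v l)"
    using A P W l by (simp add: quad_form_add_mat[of _ n])
  also have "l \<bullet> ((A * P * A\<^sup>T) *\<^sub>v l) = u \<bullet> (P *\<^sub>v u)"
    using quad_form_congruence[of "A\<^sup>T" n n P l] A P l u_def by simp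
  finally have split: "l \<bullet> x = u \<bullet> (P *\<^sub>v u) + l \<bullet> (W *\<^sub>v l)" .
  have sq1: "(w - W *\<^sub>v l) \<bullet> (Wi *\<^sub>v (w - W *\<^sub>v l)) = w \<bullet> (Wi *\<^sub>v w) - 2 * (w \<bullet> l) + l \<bullet> (W *\<^sub>v l)"
    using quad_form_diff[OF Wi symWi w Wl] is_inv_mult_vec_cancel[OF is_inv_commute[OF invW] l]
      quad_form_inverse[OF is_inv_commute[OF invW] symWi l] by simp
  have sq2: "(y + P *\<^sub>v u) \<bullet> (Q *\<^sub>v (y + P *\<^sub>v u)) = y \<bullet> (Q *\<^sub>v y) + 2 * (y \<bullet> u) + u \<bullet> (P *\<^sub>v u)"
    using quad_form_add[OF Q symQ y Pu] is_inv_mult_vec_cancel[OF invQ u]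
      quad_form_inverse[OF invQ symQ u] by simp
  have "y \<bullet> u = (A *\<^sub>v y) \<bullet> l" using scalar_prod_transpose_mult[OF A l y] u_def by simp
  moreover have "w \<bullet> l = x \<bullet> l + (A *\<^sub>v y) \<bullet> l"
    using w_def x y A l by (simp add: add_scalar_prod_distrib[of _ n])
  moreover have "x \<bullet> l = l \<bullet> x" using x l by (simp add: comm_scalar_prod[of _ n])
  moreover have "x \<bullet> (Mi *\<^sub>v x) = x \<bullet> l" using l_def by simp
  ultimately show ?thesis using split sq1 sq2 unfolding w_def[symmetric] u_def[symmetric] by linarith
qed

lemma info_prior_le_bound:
  fixes A :: "real mat"
  assumes A: "A \<in> carrier_mat n n" and invW: "is_inv n W Wi" and "psd W"
    and invQ: "is_inv n Q P" and "psd Q" and invM: "is_inv n (A * P * A\<^sup>T + W) Mi"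
    and x: "x \<in> carrier_vec n" and y: "y \<in> carrier_vec n"
  shows "x \<bullet> (Mi *\<^sub>v x) \<le> (x + A *\<^sub>v y) \<bullet> (Wi *\<^sub>v (x + A *\<^sub>v y)) + y \<bullet> (Q *\<^sub>v y)"
proof -
  have W: "W \<in> carrier_mat n n" and Wi: "Wi \<in> carrier_mat n n" and Q: "Q \<in> carrier_mat n n"
    and P: "P \<in> carrier_mat n n" and Mi: "Mi \<in> carrier_mat n n"
    using invW invQ invM unfolding is_inv_def by auto
  define l where "l = Mi *\<^sub>v x"
  have l: "l \<in> carrier_vec n" using l_def Mi x by simp
  have "0 \<le> (x + A *\<^sub>v y - W *\<^sub>v l) \<bullet> (Wi *\<^sub>v (x + A *\<^sub>v y - W *\<^sub>v l))"
    using psd_quad_nonneg[OF psd_inverse[OF \<open>psd W\<close> invW] Wi] A W x y l by simp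
  moreover have "0 \<le> (y + P *\<^sub>v (A\<^sup>T *\<^sub>v l)) \<bullet> (Q *\<^sub>v (y + P *\<^sub>v (A\<^sup>T *\<^sub>v l)))"
    using psd_quad_nonneg[OF \<open>psd Q\<close> Q] A P y l by simp
  ultimately show ?thesis
    using info_completing_square[OF A invW psd_sym[OF \<open>psd W\<close>] invQ psd_sym[OF \<open>psd Q\<close>] invM x y]
    unfolding l_def by linarith
qed

lemma info_prior_bound_attained:
  fixes A :: "real mat"
  assumes A: "A \<in> carrier_mat n n" and invW: "is_inv n W Wi" and symW: "W\<^sup>T = W"
    and invQ: "is_inv n Q P" and symQ: "Q\<^sup>T = Q" and invM: "is_inv n (A * P * A\<^sup>T + W) Mi"
    and x: "x \<in> carrier_vec n"
  shows "\<exists>y \<in> carrier_vec n. (x + A *\<^sub>v y) \<bullet> (Wi *\<^sub>v (x + A *\<^sub>v y)) + y \<bullet> (Q *\<^sub>v y) = x \<bullet> (Mi *\<^sub>v x)"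
proof -
  have W: "W \<in> carrier_mat n n" and Wi: "Wi \<in> carrier_mat n n" and Q: "Q \<in> carrier_mat n n"
    and P: "P \<in> carrier_mat n n" and Mi: "Mi \<in> carrier_mat n n"
    using invW invQ invM unfolding is_inv_def by auto
  define l where "l = Mi *\<^sub>v x"
  define v where "v = P *\<^sub>v (A\<^sup>T *\<^sub>v l)"
  define y where "y = - v"
  have l: "l \<in> carrier_vec n" using l_def Mi x by simp
  have v: "v \<in> carrier_vec n" using v_def A P l by simp
  have y: "y \<in> carrier_vec n" using y_def v by simp
  have "(A * P * A\<^sup>T) *\<^sub>v l + W *\<^sub>v l = x"
    using is_inv_mult_vec_cancel[OF invM x] A P W l l_def by (simp add: add_mult_distrib_mat_vec[of _ n n])
  moreover have "(A * P * A\<^sup>T) *\<^sub>v l = A *\<^sub>v v"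
    using assoc_mult_mat_vec3[of A n n P n "A\<^sup>T" n l] A P l v_def by simp
  ultimately have "x + A *\<^sub>v y - W *\<^sub>v l = 0\<^sub>v n"
    using A W l v unfolding y_def by (intro eq_vecI) (auto simp: mult_mat_vec_def)
  moreover have "y + v = 0\<^sub>v n" using v unfolding y_def by (intro eq_vecI) auto
  ultimately have "(x + A *\<^sub>v y) \<bullet> (Wi *\<^sub>v (x + A *\<^sub>v y)) + y \<bullet> (Q *\<^sub>v y) = x \<bullet> (Mi *\<^sub>v x)"
    using info_completing_square[OF A invW symW invQ symQ invM x y] Wi Q
    unfolding l_def[symmetric] v_def[symmetric] by simp
  then show ?thesis using y by blast
qed

lemma psd_info_lmi_of_prior:
  fixes A :: "real mat"
  assumes A: "A \<in> carrier_mat n n" and invW: "is_inv n W Wi" and "pd W"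
    and invQ: "is_inv n Q P" and "psd Q" and invM: "is_inv n (A * P * A\<^sup>T + W) Mi"
  shows "psd (four_block_mat (Wi - Mi) (Wi * A) (A\<^sup>T * Wi) (Q + A\<^sup>T * Wi * A))"
proof -
  have W: "W \<in> carrier_mat n n" and Wi: "Wi \<in> carrier_mat n n" and Q: "Q \<in> carrier_mat n n"
    and P: "P \<in> carrier_mat n n" and Mi: "Mi \<in> carrier_mat n n"
    using invW invQ invM unfolding is_inv_def by auto
  have symW: "W\<^sup>T = W" by (rule pd_sym[OF \<open>pd W\<close>])
  have symQ: "Q\<^sup>T = Q" by (rule psd_sym[OF \<open>psd Q\<close>])
  have symP: "P\<^sup>T = P" by (rule is_inv_symmetric[OF invQ symQ])
  have "(A * P * A\<^sup>T)\<^sup>T = A * P * A\<^sup>T"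
    using congruence_symmetric[of "A\<^sup>T" n n P] A P symP by simp
  then have "(A * P * A\<^sup>T + W)\<^sup>T = A * P * A\<^sup>T + W"
    using transpose_add[of "A * P * A\<^sup>T" n n W] A P W symW by simp
  then have symMi: "Mi\<^sup>T = Mi" by (rule is_inv_symmetric[OF invM])
  show ?thesis
    using info_prior_le_bound[OF A invW pd_imp_psd[OF \<open>pd W\<close>] invQ \<open>psd Q\<close> invM]
    by (intro psd_info_lmiI[OF Wi Mi Q A is_inv_symmetric[OF invW symW] symMi symQ])
qed

lemma loewner_le_info_prior:
  fixes A :: "real mat"
  assumes A: "A \<in> carrier_mat n n" and invW: "is_inv n W Wi" and symW: "W\<^sup>T = W"
    and Qp: "Qp \<in> carrier_mat n n" and Q: "Q \<in> carrier_mat n n"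
    and lmi: "psd (four_block_mat (Wi - Qp) (Wi * A) (A\<^sup>T * Wi) (Q + A\<^sup>T * Wi * A))"
    and le: "loewner_le n Q Q'" and invQ': "is_inv n Q' P'" and symQ': "Q'\<^sup>T = Q'"
    and invM: "is_inv n (A * P' * A\<^sup>T + W) Mi"
  shows "loewner_le n Qp Mi"
proof (rule loewner_leI)
  fix x :: "real vec" assume x: "x \<in> carrier_vec n"
  have Wi: "Wi \<in> carrier_mat n n" using invW unfolding is_inv_def by auto
  obtain y where y: "y \<in> carrier_vec n"
    and min: "(x + A *\<^sub>v y) \<bullet> (Wi *\<^sub>v (x + A *\<^sub>v y)) + y \<bullet> (Q' *\<^sub>v y) = x \<bullet> (Mi *\<^sub>v x)"
    using info_prior_bound_attained[OF A invW symW invQ' symQ' invM x] by blast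
  have "x \<bullet> (Qp *\<^sub>v x) \<le> (x + A *\<^sub>v y) \<bullet> (Wi *\<^sub>v (x + A *\<^sub>v y)) + y \<bullet> (Q *\<^sub>v y)"
    by (rule info_lmi_bound[OF Wi Qp Q A is_inv_symmetric[OF invW symW] lmi x y])
  also have "\<dots> \<le> x \<bullet> (Mi *\<^sub>v x)" using loewner_leD[OF le y] min by linarith
  finally show "x \<bullet> (Qp *\<^sub>v x) \<le> x \<bullet> (Mi *\<^sub>v x)" .
qed

section \<open>Sensor design and its relaxation\<close>

(* The information filter driven by measurement information R:
   Q_{t+1|t} = (h_{t+1}((Q_{t|t-1} + R_t)^{-1}))^{-1}. *)
fun prior_info :: "(nat \<Rightarrow> real mat) \<Rightarrow> real mat \<Rightarrow> (nat \<Rightarrow> real mat) \<Rightarrow> real mat \<Rightarrow> nat \<Rightarrow> real mat" where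
  "prior_info A W R Q0 0 = Q0"
| "prior_info A W R Q0 (Suc t) = minv (hmap A W (Suc t) (minv (prior_info A W R Q0 t + R t)))"

locale sensor_design =
  fixes n T :: nat and A :: "nat \<Rightarrow> real mat" and W \<Sigma>0 :: "real mat"
    and Cs Vs :: "nat \<Rightarrow> real mat set" and m :: "nat \<Rightarrow> nat"
  assumes A_dim: "\<And>t. t \<le> T \<Longrightarrow> A t \<in> carrier_mat n n"
    and W_dim: "W \<in> carrier_mat n n" and W_pd: "pd W"
    and S_pd: "pd \<Sigma>0"
    and C_dim: "\<And>t. t \<le> T \<Longrightarrow> Cs t \<subseteq> carrier_mat (m t) n"
    and V_dim: "\<And>t. t \<le> T \<Longrightarrow> Vs t \<subseteq> carrier_mat (m t) (m t)"
    and V_pd: "\<And>t V. t \<le> T \<Longrightarrow> V \<in> Vs t \<Longrightarrow> pd V"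
begin

abbreviation feasibleD where "feasibleD \<equiv> feasD n T A W \<Sigma>0 Cs Vs"
abbreviation feasibleR where "feasibleR \<equiv> feasR n T A W \<Sigma>0 Cs Vs"

lemma W_inv: "is_inv n W (minv W)"
  by (rule is_inv_minv[OF W_dim W_pd])

lemma W_sym: "W\<^sup>T = W"
  by (rule pd_sym[OF W_pd])

lemma sensor_info_psd:
  assumes "t \<le> T" and "C \<in> Cs t" and "V \<in> Vs t"
  shows "psd (C\<^sup>T * minv V * C)" and "C\<^sup>T * minv V * C \<in> carrier_mat n n"
proof -
  have C: "C \<in> carrier_mat (m t) n" and V: "V \<in> carrier_mat (m t) (m t)"
    using assms C_dim V_dim by auto
  have invV: "is_inv (m t) V (minv V)" by (rule is_inv_minv[OF V V_pd[OF assms(1,3)]])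
  then have "minv V \<in> carrier_mat (m t) (m t)" unfolding is_inv_def by auto
  then show "psd (C\<^sup>T * minv V * C)" and "C\<^sup>T * minv V * C \<in> carrier_mat n n"
    using psd_congruence[OF psd_inverse[OF pd_imp_psd[OF V_pd[OF assms(1,3)]] invV] C] C by auto
qed

lemma Rset_psd:
  assumes "t \<le> T" and "R \<in> Rset Cs Vs t"
  shows "psd R"
  using assms sensor_info_psd(1) unfolding Rset_def by blast

definition psd_seq :: "(nat \<Rightarrow> real mat) \<Rightarrow> bool" where
  "psd_seq R \<longleftrightarrow> (\<forall>t\<le>T. psd (R t) \<and> R t \<in> carrier_mat n n)"

lemma pd_hmap:
  assumes "t \<le> T" and "psd P" and "P \<in> carrier_mat n n"
  shows "pd (hmap A W (Suc t) P)" and "hmap A W (Suc t) P \<in> carrier_mat n n"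
proof -
  have At: "A t \<in> carrier_mat n n" by (rule A_dim[OF assms(1)])
  have "psd (A t * P * (A t)\<^sup>T)"
    using psd_congruence[OF assms(2), of "(A t)\<^sup>T" n] At assms(3) by simp
  moreover have "A t * P * (A t)\<^sup>T \<in> carrier_mat n n" using At assms(3) by simp
  ultimately have "pd (W + A t * P * (A t)\<^sup>T)" by (rule pd_add_psd[OF W_pd _ W_dim])
  then show "pd (hmap A W (Suc t) P)" "hmap A W (Suc t) P \<in> carrier_mat n n"
    unfolding hmap_def using comm_add_mat[of W n n "A t * P * (A t)\<^sup>T"] W_dim At assms(3) by auto
qed

lemma prior_info_pd:
  assumes "pd Q0" and "Q0 \<in> carrier_mat n n"
    and "psd_seq R"
  shows "t \<le> T \<Longrightarrow> pd (prior_info A W R Q0 t) \<and> prior_info A W R Q0 t \<in> carrier_mat n n"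
proof (induction t)
  case 0
  then show ?case using assms by simp
next
  case (Suc t)
  let ?Q = "prior_info A W R Q0 t + R t"
  have t: "t \<le> T" using Suc.prems by simp
  have R: "psd (R t)" "R t \<in> carrier_mat n n" using \<open>psd_seq R\<close> t unfolding psd_seq_def by auto
  from t have IH: "pd (prior_info A W R Q0 t)" "prior_info A W R Q0 t \<in> carrier_mat n n"
    using Suc.IH by auto
  have Q: "pd ?Q" by (rule pd_add_psd[OF IH(1) R(1) IH(2) R(2)])
  have "?Q \<in> carrier_mat n n" using IH(2) R(2) by simp
  then have invQ: "is_inv n ?Q (minv ?Q)" by (rule is_inv_minv[OF _ Q])
  then have "psd (minv ?Q)" "minv ?Q \<in> carrier_mat n n"
    using pd_imp_psd[OF pd_inverse[OF Q invQ]] unfolding is_inv_def by auto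
  note H = pd_hmap[OF t this]
  have invH: "is_inv n (hmap A W (Suc t) (minv ?Q)) (minv (hmap A W (Suc t) (minv ?Q)))"
    by (rule is_inv_minv[OF H(2,1)])
  then show ?case using pd_inverse[OF H(1) invH] unfolding is_inv_def by simp
qed

lemma feasD_at:
  assumes "feasibleD P Q Qp R C V" and "t \<le> T"
  shows "P t \<in> carrier_mat n n" "Q t \<in> carrier_mat n n" "Qp t \<in> carrier_mat n n"
    "R t \<in> carrier_mat n n" "is_inv n (P t) (Q t)" "Q t = Qp t + R t"
    "R t = (C t)\<^sup>T * minv (V t) * C t" "C t \<in> Cs t" "V t \<in> Vs t"
  using assms unfolding feasD_def by blast+

lemma feasD_prior_step:
  assumes "feasibleD P Q Qp R C V" and "Suc t \<le> T"
  shows "is_inv n (hmap A W (Suc t) (P t)) (Qp (Suc t))"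
proof -
  have "1 \<le> Suc t \<longrightarrow> is_inv n (Qp (Suc t)) (hmap A W (Suc t) (P (Suc t - 1)))"
    using assms unfolding feasD_def by blast
  then show ?thesis using is_inv_commute by simp
qed

lemma feasR_at:
  assumes "feasibleR P Q Qp R" and "t \<le> T"
  shows "P t \<in> carrier_mat n n" "Q t \<in> carrier_mat n n" "Qp t \<in> carrier_mat n n"
    "R t \<in> carrier_mat n n" "Q t = Qp t + R t"
    "psd (four_block_mat (P t) (1\<^sub>m n) (1\<^sub>m n) (Q t))" "R t \<in> Rset Cs Vs t"
  using assms unfolding feasR_def by blast+

lemma feasR_info_lmi:
  assumes "feasibleR P Q Qp R" and "Suc t \<le> T"
  shows "psd (four_block_mat (minv W - Qp (Suc t)) (minv W * A t) ((A t)\<^sup>T * minv W)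
    (Q t + (A t)\<^sup>T * minv W * A t))"
proof -
  have "1 \<le> Suc t \<longrightarrow> psd (four_block_mat (minv W - Qp (Suc t)) (minv W * A (Suc t - 1))
      ((A (Suc t - 1))\<^sup>T * minv W) (Q (Suc t - 1) + (A (Suc t - 1))\<^sup>T * minv W * A (Suc t - 1)))"
    using assms unfolding feasR_def by blast
  then show ?thesis by simp
qed

lemma init_info_pd:
  assumes "is_inv n Q0 \<Sigma>0"
  shows "pd Q0" and "Q0 \<in> carrier_mat n n"
  using pd_inverse[OF S_pd is_inv_commute[OF assms]] assms unfolding is_inv_def by auto

lemma prior_info_inv:
  assumes init: "is_inv n Q0 \<Sigma>0"
    and "psd_seq R" and t: "t \<le> T"
  defines "Q \<equiv> prior_info A W R Q0 t + R t"
  shows "pd Q" and "is_inv n Q (minv Q)"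
    and "Suc t \<le> T \<Longrightarrow> is_inv n (hmap A W (Suc t) (minv Q)) (prior_info A W R Q0 (Suc t))"
proof -
  have Qp: "pd (prior_info A W R Q0 t)" "prior_info A W R Q0 t \<in> carrier_mat n n"
    using prior_info_pd[OF init_info_pd[OF init] \<open>psd_seq R\<close> t] by auto
  have R: "psd (R t)" "R t \<in> carrier_mat n n" using \<open>psd_seq R\<close> t unfolding psd_seq_def by auto
  show pdQ: "pd Q" unfolding Q_def by (rule pd_add_psd[OF Qp(1) R(1) Qp(2) R(2)])
  have "Q \<in> carrier_mat n n" unfolding Q_def using Qp(2) R(2) by simp
  then show invQ: "is_inv n Q (minv Q)" by (rule is_inv_minv[OF _ pdQ])
  then have "psd (minv Q)" "minv Q \<in> carrier_mat n n"
    using pd_imp_psd[OF pd_inverse[OF pdQ invQ]] unfolding is_inv_def by auto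
  note H = pd_hmap[OF t this]
  show "is_inv n (hmap A W (Suc t) (minv Q)) (prior_info A W R Q0 (Suc t))"
    using is_inv_minv[OF H(2,1)] unfolding Q_def by simp
qed

lemma feasD_prior_info_eq:
  assumes fD: "feasibleD P Q Qp R C V"
  shows "t \<le> T \<Longrightarrow> Qp t = prior_info A W R (Qp 0) t"
proof (induction t)
  case 0
  show ?case by simp
next
  case (Suc t)
  have t: "t \<le> T" using Suc.prems by simp
  have "P t = minv (Q t)" using minv_eqI[OF is_inv_commute[OF feasD_at(5)[OF fD t]]] by simp
  also have "Q t = prior_info A W R (Qp 0) t + R t" using feasD_at(6)[OF fD t] Suc.IH t by simp
  finally show ?case using minv_eqI[OF feasD_prior_step[OF fD Suc.prems]] by simp
qed

lemma feasD_psd_seq: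
  assumes "feasibleD P Q Qp R C V"
  shows "psd_seq R"
  unfolding psd_seq_def using sensor_info_psd feasD_at[OF assms] by simp

lemma feasD_Q_pd:
  assumes fD: "feasibleD P Q Qp R C V" and t: "t \<le> T"
  shows "pd (Q t)"
proof -
  have init: "is_inv n (Qp 0) \<Sigma>0" using fD unfolding feasD_def by blast
  have "pd (prior_info A W R (Qp 0) t + R t)"
    by (rule prior_info_inv(1)[OF init feasD_psd_seq[OF fD] t])
  then show ?thesis using feasD_at(6)[OF fD t] feasD_prior_info_eq[OF fD t] by simp
qed

lemma feasD_imp_feasR:
  assumes fD: "feasibleD P Q Qp R C V"
  shows "feasibleR P Q Qp R"
  unfolding feasR_def
proof (intro conjI allI impI)
  show "is_inv n (Qp 0) \<Sigma>0" using fD unfolding feasD_def by blast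
  fix t assume t: "t \<le> T"
  note D = feasD_at[OF fD t]
  show "P t \<in> carrier_mat n n" "Q t \<in> carrier_mat n n" "Qp t \<in> carrier_mat n n"
    "R t \<in> carrier_mat n n" "Q t = Qp t + R t" using D by simp_all
  show "psd (four_block_mat (P t) (1\<^sub>m n) (1\<^sub>m n) (Q t))"
    by (rule psd_identity_block_inverse[OF D(5) pd_imp_psd[OF feasD_Q_pd[OF fD t]]])
  show "R t \<in> Rset Cs Vs t" using D(7-9) unfolding Rset_def by blast
  assume "1 \<le> t"
  then obtain k where k: "t = Suc k" by (cases t) auto
  with t have kT: "k \<le> T" by simp
  have "is_inv n (A k * P k * (A k)\<^sup>T + W) (Qp (Suc k))"
    using feasD_prior_step[OF fD] k t unfolding hmap_def by simp
  from psd_info_lmi_of_prior[OF A_dim[OF kT] W_inv W_pd is_inv_commute[OF feasD_at(5)[OF fD kT]]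
      pd_imp_psd[OF feasD_Q_pd[OF fD kT]] this]
  show "psd (four_block_mat (minv W - Qp t) (minv W * A (t - 1)) ((A (t - 1))\<^sup>T * minv W)
      (Q (t - 1) + (A (t - 1))\<^sup>T * minv W * A (t - 1)))"
    using k by simp
qed

lemma feasD_prior_info:
  assumes init: "is_inv n Q0 \<Sigma>0"
    and sensor: "\<And>t. t \<le> T \<Longrightarrow> R t = (C t)\<^sup>T * minv (V t) * C t \<and> C t \<in> Cs t \<and> V t \<in> Vs t"
  shows "feasibleD (\<lambda>t. minv (prior_info A W R Q0 t + R t)) (\<lambda>t. prior_info A W R Q0 t + R t)
    (prior_info A W R Q0) R C V"
proof -
  have "psd_seq R" unfolding psd_seq_def using sensor sensor_info_psd by simp
  note Q = prior_info_inv[OF init this]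
  show ?thesis
    unfolding feasD_def
  proof (intro conjI allI impI)
    show "is_inv n (prior_info A W R Q0 0) \<Sigma>0" using init by simp
    fix t assume t: "t \<le> T"
    show "is_inv n (minv (prior_info A W R Q0 t + R t)) (prior_info A W R Q0 t + R t)"
      by (rule is_inv_commute[OF Q(2)[OF t]])
    then show "minv (prior_info A W R Q0 t + R t) \<in> carrier_mat n n"
      "prior_info A W R Q0 t + R t \<in> carrier_mat n n"
      unfolding is_inv_def by auto
    show "prior_info A W R Q0 t \<in> carrier_mat n n"
      using prior_info_pd[OF init_info_pd[OF init] \<open>psd_seq R\<close> t] by simp
    show "R t \<in> carrier_mat n n" using \<open>psd_seq R\<close> t unfolding psd_seq_def by simp
    show "prior_info A W R Q0 t + R t = prior_info A W R Q0 t + R t" ..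
    show "R t = (C t)\<^sup>T * minv (V t) * C t" "C t \<in> Cs t" "V t \<in> Vs t" using sensor[OF t] by auto
    assume "1 \<le> t"
    then obtain k where k: "t = Suc k" by (cases t) auto
    show "is_inv n (prior_info A W R Q0 t) (hmap A W t (minv (prior_info A W R Q0 (t - 1) + R (t - 1))))"
      using is_inv_commute[OF Q(3)[of k]] k t by simp
  qed
qed

lemma feasR_psd_seq:
  assumes "feasibleR P Q Qp R"
  shows "psd_seq R"
  unfolding psd_seq_def using Rset_psd feasR_at[OF assms] by simp

lemma feasR_le_prior_info:
  assumes fR: "feasibleR P Q Qp R"
  shows "t \<le> T \<Longrightarrow> loewner_le n (Q t) (prior_info A W R (Qp 0) t + R t)"
proof (induction t)
  case 0
  then show ?case using feasR_at(5)[OF fR] by (simp add: loewner_le_def)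
next
  case (Suc t)
  have t: "t \<le> T" using Suc.prems by simp
  have init: "is_inv n (Qp 0) \<Sigma>0" using fR unfolding feasR_def by blast
  note Q' = prior_info_inv[OF init feasR_psd_seq[OF fR] t]
  let ?Q' = "prior_info A W R (Qp 0) t + R t"
  have "is_inv n (A t * minv ?Q' * (A t)\<^sup>T + W) (prior_info A W R (Qp 0) (Suc t))"
    using Q'(3)[OF Suc.prems] unfolding hmap_def by simp
  from loewner_le_info_prior[OF A_dim[OF t] W_inv W_sym feasR_at(3)[OF fR Suc.prems]
      feasR_at(2)[OF fR t] feasR_info_lmi[OF fR Suc.prems] Suc.IH[OF t] Q'(2) pd_sym[OF Q'(1)] this]
  have "loewner_le n (Qp (Suc t)) (prior_info A W R (Qp 0) (Suc t))" .
  moreover have "prior_info A W R (Qp 0) (Suc t) \<in> carrier_mat n n"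
    using Q'(3)[OF Suc.prems] unfolding is_inv_def by simp
  ultimately show ?case
    using loewner_le_add_right feasR_at(3-5)[OF fR Suc.prems] by simp
qed

lemma feasR_imp_improved_feasD:
  assumes fR: "feasibleR P Q Qp R"
  shows "\<exists>P' Q' Qp' C V. feasibleD P' Q' Qp' R C V
    \<and> (\<forall>t\<le>T. loewner_le n (Q t) (Q' t) \<and> loewner_le n (P' t) (P t)) \<and> cost T P' \<le> cost T P"
proof -
  have "\<forall>t. \<exists>C V. t \<le> T \<longrightarrow> R t = C\<^sup>T * minv V * C \<and> C \<in> Cs t \<and> V \<in> Vs t"
    using feasR_at(7)[OF fR] unfolding Rset_def by blast
  then obtain C V where sensor: "\<And>t. t \<le> T \<Longrightarrow> R t = (C t)\<^sup>T * minv (V t) * C t \<and> C t \<in> Cs t \<and> V t \<in> Vs t"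
    by metis
  have init: "is_inv n (Qp 0) \<Sigma>0" using fR unfolding feasR_def by blast
  define Q' where "Q' t = prior_info A W R (Qp 0) t + R t" for t
  define P' where "P' t = minv (Q' t)" for t
  have fD: "feasibleD P' Q' (prior_info A W R (Qp 0)) R C V"
    unfolding P'_def Q'_def by (rule feasD_prior_info[OF init sensor])
  have QQ': "loewner_le n (Q t) (Q' t)" if "t \<le> T" for t
    unfolding Q'_def by (rule feasR_le_prior_info[OF fR that])
  have P'P: "loewner_le n (P' t) (P t)" if t: "t \<le> T" for t
    using loewner_le_inverse_of_identity_block[OF feasR_at(1,2,6)[OF fR t] QQ'[OF t]
        is_inv_commute[OF feasD_at(5)[OF fD t]] pd_sym[OF feasD_Q_pd[OF fD t]]] .
  have "cost T P' \<le> cost T P"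
    by (rule cost_mono_loewner[OF P'P feasD_at(1)[OF fD] feasR_at(1)[OF fR]])
  then show ?thesis using fD QQ' P'P by blast
qed

lemma feasD_cong:
  assumes "\<And>t. t \<le> T \<Longrightarrow> P t = P' t \<and> Q t = Q' t \<and> Qp t = Qp' t"
    and "feasibleD P' Q' Qp' R C V"
  shows "feasibleD P Q Qp R C V"
  using assms unfolding feasD_def by auto

lemma feasD_if_no_cheaper_improvement:
  assumes fR: "feasibleR P Q Qp R" and fD: "feasibleD P' Q' Qp' R C V"
    and le: "\<forall>t\<le>T. loewner_le n (Q t) (Q' t) \<and> loewner_le n (P' t) (P t)"
    and cost: "cost T P \<le> cost T P'"
  shows "feasibleD P Q Qp R C V"
proof (rule feasD_cong[OF _ fD])
  fix t assume t: "t \<le> T"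
  note R = feasR_at[OF fR t] and D = feasD_at[OF fD t]
  have "cost T P' \<le> cost T P"
    using le by (intro cost_mono_loewner) (auto simp: feasD_at(1)[OF fD] feasR_at(1)[OF fR])
  then have "(\<Sum>t\<le>T. mtrace (P' t)) = (\<Sum>t\<le>T. mtrace (P t))" using cost unfolding cost_def by simp
  then have tr: "mtrace (P' t) = mtrace (P t)"
    by (rule sum_mono_inv) (use t le feasD_at(1)[OF fD] feasR_at(1)[OF fR] trace_mono_loewner in auto)
  have symP: "(P t)\<^sup>T = P t" and symQ: "(Q t)\<^sup>T = Q t"
    using psd_four_block_diag_sym[OF R(1) one_carrier_mat one_carrier_mat R(2) R(6)] by auto
  have symQ': "(Q' t)\<^sup>T = Q' t" by (rule pd_sym[OF feasD_Q_pd[OF fD t]])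
  have PP': "P' t = P t"
    using le t by (intro loewner_le_trace_eq[OF _ D(1) R(1) is_inv_symmetric[OF is_inv_commute[OF D(5)] symQ'] symP tr]) auto
  have "loewner_le n (Q' t) (Q t)"
    using loewner_le_of_identity_block_inverse[OF R(1,2,6) _ symQ'] is_inv_commute[OF D(5)] PP' by simp
  then have QQ': "Q t = Q' t"
    using le t by (intro loewner_le_antisym[OF _ _ R(2) D(2) symQ symQ']) auto
  have "Qp t = Qp' t"
    by (rule add_mat_right_cancel[of _ "R t"]) (use R D QQ' in auto)
  with PP' QQ' show "P t = P' t \<and> Q t = Q' t \<and> Qp t = Qp' t" by simp
qed

end

theorem theorem2:
  fixes n T :: nat and A :: "nat \<Rightarrow> real mat" and W \<Sigma>0 :: "real mat"
    and Cs Vs :: "nat \<Rightarrow> real mat set" and m :: "nat \<Rightarrow> nat"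
  assumes A_dim: "\<forall>t\<le>T. A t \<in> carrier_mat n n"
    and W_dim: "W \<in> carrier_mat n n" and W_pd: "pd W"
    and S_dim: "\<Sigma>0 \<in> carrier_mat n n" and S_pd: "pd \<Sigma>0"
    and C_dim: "\<forall>t\<le>T. Cs t \<subseteq> carrier_mat (m t) n"
    and V_dim: "\<forall>t\<le>T. Vs t \<subseteq> carrier_mat (m t) (m t)"
    and V_pd: "\<forall>t\<le>T. \<forall>V\<in>Vs t. pd V"
  shows "(\<forall>P Q Qp R. optR n T A W \<Sigma>0 Cs Vs P Q Qp R \<longrightarrow>
            (\<exists>C V. optD n T A W \<Sigma>0 Cs Vs P Q Qp R C V))
       \<and> (\<forall>P Q Qp R C V. optD n T A W \<Sigma>0 Cs Vs P Q Qp R C V \<longrightarrow>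
            optR n T A W \<Sigma>0 Cs Vs P Q Qp R)"
proof -
  interpret sensor_design n T A W \<Sigma>0 Cs Vs m
    using assms by unfold_locales auto
  show ?thesis
  proof (intro conjI allI impI)
    fix P Q Qp R
    assume "optR n T A W \<Sigma>0 Cs Vs P Q Qp R"
    then have fR: "feasibleR P Q Qp R"
      and min: "\<And>P' Q' Qp' R'. feasibleR P' Q' Qp' R' \<Longrightarrow> cost T P \<le> cost T P'"
      unfolding optR_def by blast+
    obtain P' Q' Qp' C V where fD: "feasibleD P' Q' Qp' R C V"
      and le: "\<forall>t\<le>T. loewner_le n (Q t) (Q' t) \<and> loewner_le n (P' t) (P t)"
      using feasR_imp_improved_feasD[OF fR] by blast
    have "feasibleD P Q Qp R C V"
      by (rule feasD_if_no_cheaper_improvement[OF fR fD le min[OF feasD_imp_feasR[OF fD]]])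
    then show "\<exists>C V. optD n T A W \<Sigma>0 Cs Vs P Q Qp R C V"
      unfolding optD_def using min feasD_imp_feasR by blast
  next
    fix P Q Qp R C V
    assume "optD n T A W \<Sigma>0 Cs Vs P Q Qp R C V"
    then have fD: "feasibleD P Q Qp R C V"
      and min: "\<And>P' Q' Qp' R' C' V'. feasibleD P' Q' Qp' R' C' V' \<Longrightarrow> cost T P \<le> cost T P'"
      unfolding optD_def by blast+
    have "cost T P \<le> cost T P'" if "feasibleR P' Q' Qp' R'" for P' Q' Qp' R'
      using feasR_imp_improved_feasD[OF that] min by (meson order_trans)
    then show "optR n T A W \<Sigma>0 Cs Vs P Q Qp R"
      unfolding optR_def using feasD_imp_feasR[OF fD] by blast
  qed
qed

end
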